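(* Let $\rho>-1$, and for $t\in\mathbb R$ let $\tilde a_n=\tilde a_n(t)>0$ ($n\ge1$, $\tilde a_0=0$) be the recurrence coefficients in $\tilde a_{n+1}\tilde p_{n+1}(u)=u\tilde p_n(u)-\tilde a_n\tilde p_{n-1}(u)$ of the orthonormal polynomials for the weight $|u|^{2\rho+1}\exp(-u^4/4-tu^2)$ on $\mathbb R$. Then for every $n\ge1$, $v=\tilde a_n^2$ satisfies the Painlevé IV equation $$\ddot v=\frac{\dot v^2}{2v}+\frac{3v^3}{2}+4tv^2+2(t^2-\alpha)v+\frac{\beta}{v}$$ with $$\alpha=-\frac n2-(2\rho+1)\frac{1+3(-1)^n}{4},\qquad \beta=-\frac{\big(n+(2\rho+1)\,\mathrm{odd}(n)\big)^2}{2},$$ where $\mathrm{odd}(n)=(1-(-1)^n)/2$.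
   Context: Dots denote $d/dt$. *)

theory Defs
  imports "HOL-Analysis.Analysis" "HOL-Computational_Algebra.Polynomial"
begin

definition pIV_weight :: "real \<Rightarrow> real \<Rightarrow> real \<Rightarrow> real" where
  "pIV_weight \<rho> t u = \<bar>u\<bar> powr (2 * \<rho> + 1) * exp (- (u ^ 4) / 4 - t * u ^ 2)"

definition orthonormal_polys :: "(real \<Rightarrow> real) \<Rightarrow> (nat \<Rightarrow> real poly) \<Rightarrow> bool" where
  "orthonormal_polys w p \<longleftrightarrow>
     (\<forall>n. degree (p n) = n \<and> lead_coeff (p n) > 0) \<and>
     (\<forall>m n. integrable lborel (\<lambda>u. poly (p m) u * poly (p n) u * w u) \<and>
            (LINT u|lborel. poly (p m) u * poly (p n) u * w u) = (if m = n then 1 else 0))"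

end

theory Submission
  imports Defs
begin

(* Write b_k = a_k^2, V(u) = u^4/4 + t u^2, and L q for the integral of q against the weight
   w(u) = |u|^(2 rho + 1) exp (- V(u)).  Computing L (V' P_n P_(n-1)) once through the three-term
   recurrence and once by integrating (u |u|^(2 rho + 1) exp (- V(u)) R(u))' = 0, where u R = P_n P_(n-1),
   gives Freud's equation  b_n (b_(n+1) + b_n + b_(n-1) + 2 t) = n + (2 rho + 1) odd(n).
   Since d/dt w = - u^2 w, differentiating the moments gives b_1' = - b_1 b_2; Freud's equation
   determines b_(k+2) from b_(k+1) and b_k, so by induction all b_k obey the Toda equations
   b_k' = - b_k (b_(k+1) - b_(k-1)).  Differentiating b_n' once more and eliminating b_(n-2), b_(n+2)
   and b_(n-1) + b_(n+1) with the Freud equations at n - 1, n, n + 1 leaves Painleve IV. *)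

section \<open>Orthonormal polynomials with a recurrence without diagonal term\<close>

locale orthonormal_three_term =
  fixes w :: "real \<Rightarrow> real" and P :: "nat \<Rightarrow> real poly" and A :: "nat \<Rightarrow> real"
  assumes orthonormal: "orthonormal_polys w P"
    and A_0: "A 0 = 0"
    and A_pos: "\<And>k. k \<ge> 1 \<Longrightarrow> A k > 0"
    and three_term: "\<And>k u. A (k + 1) * poly (P (k + 1)) u = u * poly (P k) u - A k * poly (P (k - 1)) u"
begin

lemma degree_P: "degree (P n) = n"
  and lead_coeff_P_pos: "lead_coeff (P n) > 0"
  using orthonormal unfolding orthonormal_polys_def by blast+

lemma lead_coeff_P_nonzero: "lead_coeff (P n) \<noteq> 0"
  using lead_coeff_P_pos[of n] by linarith

lemma P_0: "P 0 = [:lead_coeff (P 0):]"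
  using degree_P[of 0] by (metis degree_0_id)

lemma P_span:
  assumes "degree q \<le> m"
  shows "\<exists>c. q = (\<Sum>i\<le>m. smult (c i) (P i))"
proof -
  have "\<exists>c. q = (\<Sum>i<m. smult (c i) (P i))" if "\<And>i. i \<ge> m \<Longrightarrow> coeff q i = 0" for q m
    using that
  proof (induction m arbitrary: q)
    case 0
    then have "q = 0" by (simp add: poly_eq_iff)
    then show ?case by simp
  next
    case (Suc m)
    define k where "k = coeff q m / lead_coeff (P m)"
    define r where "r = q - smult k (P m)"
    have "coeff r i = 0" if "i \<ge> m" for i
      using Suc.prems[of i] that degree_P[of m] lead_coeff_P_nonzero[of m]
      by (cases "i = m") (auto simp: r_def k_def coeff_eq_0)
    then obtain c where c: "r = (\<Sum>i<m. smult (c i) (P i))"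
      using Suc.IH by blast
    have "(\<Sum>i<m. smult ((c(m := k)) i) (P i)) = (\<Sum>i<m. smult (c i) (P i))"
      by (rule sum.cong) auto
    then have "q = (\<Sum>i<Suc m. smult ((c(m := k)) i) (P i))"
      using c by (simp add: r_def)
    then show ?case by blast
  qed
  moreover have "coeff q i = 0" if "i \<ge> Suc m" for i
    using assms that by (simp add: coeff_eq_0)
  ultimately obtain c where "q = (\<Sum>i<Suc m. smult (c i) (P i))"
    by blast
  then show ?thesis
    by (auto simp: lessThan_Suc_atMost)
qed

lemma integrable_P_P: "integrable lborel (\<lambda>u. poly (P m) u * poly (P n) u * w u)"
  and integral_P_P: "(LINT u|lborel. poly (P m) u * poly (P n) u * w u) = (if m = n then 1 else 0)"
  using orthonormal unfolding orthonormal_polys_def by auto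

lemma integrable_poly_weight: "integrable lborel (\<lambda>u. poly q u * w u)"
proof -
  have P_weight: "integrable lborel (\<lambda>u. poly (P i) u * w u)" for i
  proof -
    have "(\<lambda>u. poly (P i) u * w u) = (\<lambda>u. poly (P i) u * poly (P 0) u * w u / lead_coeff (P 0))"
      using lead_coeff_P_nonzero[of 0] by (subst P_0) simp
    then show ?thesis
      using integrable_P_P[of i 0] by simp
  qed
  obtain c where c: "q = (\<Sum>i\<le>degree q. smult (c i) (P i))"
    using P_span by blast
  have q_weight: "poly q u * w u = (\<Sum>i\<le>degree q. c i * (poly (P i) u * w u))" for u
    using arg_cong[OF c, of "\<lambda>r. poly r u * w u"] by (simp add: poly_sum sum_distrib_right mult.assoc)
  show ?thesis
    unfolding q_weight by (intro Bochner_Integration.integrable_sum integrable_mult_right P_weight)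
qed

definition L :: "real poly \<Rightarrow> real" where
  "L q = (LINT u|lborel. poly q u * w u)"

lemma L_add [simp]: "L (q + r) = L q + L r"
  unfolding L_def using integrable_poly_weight[of q] integrable_poly_weight[of r]
  by (simp add: distrib_right)

lemma L_smult [simp]: "L (smult c q) = c * L q"
  unfolding L_def by (simp add: mult.assoc)

lemma L_diff [simp]: "L (q - r) = L q - L r"
  using L_add[of q "- r"] L_smult[of "-1" r] by simp

lemma L_0 [simp]: "L 0 = 0"
  by (simp add: L_def)

lemma L_sum: "L (\<Sum>i\<in>S. f i) = (\<Sum>i\<in>S. L (f i))"
  by (induction S rule: infinite_finite_induct) auto

lemma L_P_P [simp]: "L (P m * P n) = (if m = n then 1 else 0)"
  unfolding L_def using integral_P_P[of m n] by (simp add: mult.assoc)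

lemma L_mult_P:
  assumes "degree q \<le> m"
  shows "L (q * P m) = coeff q m / lead_coeff (P m)"
proof -
  obtain c where c: "q = (\<Sum>i\<le>m. smult (c i) (P i))"
    using P_span[OF assms] by blast
  have "L (q * P m) = c m"
    by (subst c) (simp add: sum_distrib_right L_sum if_distrib cong: if_cong)
  moreover have "coeff q m = c m * lead_coeff (P m)"
  proof -
    have "coeff q m = (\<Sum>i\<le>m. c i * coeff (P i) m)"
      by (subst c) (simp add: coeff_sum)
    also have "\<dots> = (\<Sum>i\<in>{m}. c i * coeff (P i) m)"
      by (rule sum.mono_neutral_right) (auto simp: degree_P coeff_eq_0)
    finally show ?thesis by (simp add: degree_P)
  qed
  ultimately show ?thesis
    using lead_coeff_P_nonzero[of m] by simp
qed

lemma L_mult_P_lower: "degree q < m \<Longrightarrow> L (q * P m) = 0"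
  using L_mult_P[of q m] by (simp add: coeff_eq_0)

lemma X_mult_P: "[:0, 1:] * P k = smult (A (k + 1)) (P (k + 1)) + smult (A k) (P (k - 1))"
  using three_term[of k] by (simp add: poly_eq_poly_eq_iff[symmetric] fun_eq_iff algebra_simps)

lemma A_eq_lead_coeff_ratio:
  assumes "k \<ge> 1"
  shows "A k = lead_coeff (P (k - 1)) / lead_coeff (P k)"
proof -
  obtain j where j: "k = j + 1"
    using assms by (metis add.commute le_Suc_ex)
  have "lead_coeff (P j) = coeff ([:0, 1:] * P j) (j + 1)"
    by (simp add: degree_P)
  also have "\<dots> = A (j + 1) * lead_coeff (P (j + 1))"
    unfolding X_mult_P by (simp add: degree_P coeff_eq_0)
  finally show ?thesis
    using j lead_coeff_P_nonzero[of k] by (simp add: field_simps)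
qed

text \<open>As the recurrence has no diagonal term, \<open>P k\<close> has the parity of \<open>k\<close>.\<close>
lemma poly_P_odd_0:
  assumes "odd k"
  shows "poly (P k) 0 = 0"
proof -
  have "poly (P (2 * j + 1)) 0 = 0" for j
  proof (induction j)
    case 0
    show ?case using three_term[of 0 0] A_0 A_pos[of 1] by simp
  next
    case (Suc j)
    then show ?case
      using three_term[of "2 * j + 2" 0] A_pos[of "2 * j + 3"] by (simp add: numeral_3_eq_3)
  qed
  then show ?thesis
    using assms by (metis oddE)
qed

lemma P_odd_eq_X_mult:
  assumes "odd k"
  obtains s where "P k = [:0, 1:] * s"
proof -
  have "[:- 0, 1:] dvd P k"
    using poly_P_odd_0[OF assms] poly_eq_0_iff_dvd by blast
  then show ?thesis
    using that by (auto elim: dvdE)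
qed

lemma L_X_P_Suc_P: "L ([:0, 1:] * P (k + 1) * P k) = A (k + 1)"
  unfolding X_mult_P by (simp add: distrib_right)

lemma L_X3_P_Suc_P:
  "L ([:0, 0, 0, 1:] * P (k + 1) * P k) = A (k + 1) * (A (k + 2)^2 + A (k + 1)^2 + A k^2)"
proof -
  have "[:0, 0, 0, 1:] * P (k + 1) * P k = ([:0, 1:] * ([:0, 1:] * P (k + 1))) * ([:0, 1:] * P k)"
    by (simp add: algebra_simps)
  then show ?thesis
    by (simp only: X_mult_P distrib_left distrib_right mult_smult_left mult_smult_right L_add L_smult)
      (cases k, simp_all add: A_0 algebra_simps power2_eq_square)
qed

lemma L_pderiv_P_P:
  assumes "n \<ge> 1"
  shows "L (pderiv (P n) * P (n - 1)) = real n / A n"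
proof -
  have "degree (pderiv (P n)) \<le> n - 1"
    by (simp add: degree_pderiv degree_P)
  then have "L (pderiv (P n) * P (n - 1)) = coeff (pderiv (P n)) (n - 1) / lead_coeff (P (n - 1))"
    by (rule L_mult_P)
  also have "coeff (pderiv (P n)) (n - 1) = real n * lead_coeff (P n)"
    using assms by (simp add: coeff_pderiv degree_P)
  finally show ?thesis
    using assms lead_coeff_P_nonzero[of n] by (simp add: A_eq_lead_coeff_ratio)
qed

lemma L_P_mult_P_pred_div_X:
  assumes "n \<ge> 1" and R: "[:0, 1:] * R = P n * P (n - 1)"
  shows "L R = of_bool (odd n) / A n"
proof (cases "odd n")
  case True
  then obtain s where s: "P n = [:0, 1:] * s"
    by (rule P_odd_eq_X_mult)
  have "s \<noteq> 0"
    using s degree_P[of n] assms(1) by auto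
  then have "degree s = n - 1"
    using s degree_P[of n] by simp
  moreover have "R = s * P (n - 1)"
    using R s by (simp add: mult.assoc)
  moreover have "coeff s (n - 1) = lead_coeff (P n)"
    using s assms(1) degree_P[of n] by (cases n) auto
  ultimately show ?thesis
    using True assms(1) L_mult_P[of s "n - 1"] lead_coeff_P_nonzero[of n] by (simp add: A_eq_lead_coeff_ratio)
next
  case False
  then have "odd (n - 1)"
    using assms(1) by simp
  then obtain s where s: "P (n - 1) = [:0, 1:] * s"
    by (rule P_odd_eq_X_mult)
  have "s \<noteq> 0"
    using s degree_P[of "n - 1"] False assms(1) by (auto simp: odd_pos)
  then have "degree s < n"
    using s degree_P[of "n - 1"] assms(1) by simp
  moreover have "R = s * P n"
    using R s by (simp add: algebra_simps)
  ultimately show ?thesis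
    using False L_mult_P_lower by simp
qed

lemma X_dvd_P_mult_P_pred:
  assumes "n \<ge> 1"
  obtains R where "[:0, 1:] * R = P n * P (n - 1)"
proof (cases "odd n")
  case True
  then obtain s where "P n = [:0, 1:] * s"
    by (rule P_odd_eq_X_mult)
  then show ?thesis
    using that[of "s * P (n - 1)"] by (simp add: mult.assoc)
next
  case False
  then have "odd (n - 1)"
    using assms by simp
  then obtain s where "P (n - 1) = [:0, 1:] * s"
    by (rule P_odd_eq_X_mult)
  then show ?thesis
    using that[of "P n * s"] by (simp add: algebra_simps)
qed

lemma L_quartic_P_mult_P_pred:
  assumes "n \<ge> 1"
  shows "L ([:0, 2 * t, 0, 1:] * P n * P (n - 1)) = A n * (A (n + 1)^2 + A n^2 + A (n - 1)^2) + 2 * t * A n"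
proof -
  obtain k where k: "n = k + 1"
    using assms by (metis add.commute le_Suc_ex)
  have "[:0, 2 * t, 0, 1:] * P n * P (n - 1)
      = [:0, 0, 0, 1:] * P (k + 1) * P k + smult (2 * t) ([:0, 1:] * P (k + 1) * P k)"
    by (simp add: k algebra_simps)
  then show ?thesis
    by (simp only: L_add L_smult L_X3_P_Suc_P L_X_P_Suc_P) (simp add: k)
qed

text \<open>The hypothesis \<open>by_parts\<close> is \<open>\<integral> (u \<bar>u\<bar>^(c - 1) e^(-V(u)) R(u))' du = 0\<close> for the quartic
  potential \<open>V(u) = u^4/4 + t u^2\<close>, written in terms of \<open>L\<close>.\<close>
lemma L_quartic_P_mult_P_pred_by_parts:
  assumes by_parts: "\<And>R. L (smult c R + [:0, 1:] * pderiv R - [:0, 1:] * [:0, 2 * t, 0, 1:] * R) = 0"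
    and n: "n \<ge> 1" and R: "[:0, 1:] * R = P n * P (n - 1)"
  shows "L ([:0, 2 * t, 0, 1:] * P n * P (n - 1)) = (c - 1) * L R + real n / A n"
proof -
  define X :: "real poly" where "X = [:0, 1:]"
  define W where "W = [:0, 2 * t, 0, 1:]"
  have pderiv_R: "X * pderiv R = pderiv (P n * P (n - 1)) - R"
    using arg_cong[OF R, of pderiv] by (simp add: X_def pderiv_mult pderiv_pCons)
  have X_W_R: "X * W * R = W * P n * P (n - 1)"
    using R[folded X_def] by (metis mult.assoc mult.commute)
  have "0 = L (smult c R + X * pderiv R - X * W * R)"
    using by_parts[of R, folded X_def W_def] by (rule sym)
  also have "\<dots> = c * L R + L (pderiv (P n * P (n - 1))) - L R - L (W * P n * P (n - 1))"
    unfolding pderiv_R X_W_R by simp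
  also have "L (pderiv (P n * P (n - 1))) = L (P n * pderiv (P (n - 1))) + L (pderiv (P n) * P (n - 1))"
    by (simp add: pderiv_mult mult_ac)
  also have "L (pderiv (P n) * P (n - 1)) = real n / A n"
    by (rule L_pderiv_P_P[OF n])
  also have "L (P n * pderiv (P (n - 1))) = 0"
    using L_mult_P_lower[of "pderiv (P (n - 1))" n] n
    by (simp add: degree_pderiv degree_P mult.commute)
  finally show ?thesis
    unfolding W_def by (simp add: algebra_simps)
qed

lemma freud_equation:
  assumes by_parts: "\<And>R. L (smult c R + [:0, 1:] * pderiv R - [:0, 1:] * [:0, 2 * t, 0, 1:] * R) = 0"
    and n: "n \<ge> 1"
  shows "A n^2 * (A (n + 1)^2 + A n^2 + A (n - 1)^2 + 2 * t) = real n + (c - 1) * of_bool (odd n)"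
proof -
  obtain R where R: "[:0, 1:] * R = P n * P (n - 1)"
    using X_dvd_P_mult_P_pred[OF n] by blast
  have "A n * (A (n + 1)^2 + A n^2 + A (n - 1)^2) + 2 * t * A n = (c - 1) * L R + real n / A n"
    using L_quartic_P_mult_P_pred[OF n, of t] L_quartic_P_mult_P_pred_by_parts[OF by_parts n R] by simp
  then show ?thesis
    using L_P_mult_P_pred_div_X[OF n R] A_pos[OF n] by (simp add: field_simps power2_eq_square)
qed

lemma L_1_pos: "L 1 > 0"
  and A_1_squared: "A 1 ^ 2 = L [:0, 0, 1:] / L 1"
proof -
  define l where "l = lead_coeff (P 0)"
  have P_0_l: "P 0 = [:l:]" and "l \<noteq> 0"
    using P_0 lead_coeff_P_nonzero unfolding l_def by auto
  have "1 = L (P 0 * P 0)"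
    by simp
  also have "P 0 * P 0 = smult (l\<^sup>2) 1"
    by (simp add: P_0_l power2_eq_square)
  also have "L (smult (l\<^sup>2) 1) = l\<^sup>2 * L 1"
    by (rule L_smult)
  finally have L_1: "L 1 = 1 / l\<^sup>2"
    using \<open>l \<noteq> 0\<close> by (simp add: field_simps)
  have "A 1 ^ 2 = L (([:0, 1:] * P 0) * ([:0, 1:] * P 0))"
    unfolding X_mult_P by (simp add: A_0 power2_eq_square)
  also have "([:0, 1:] * P 0) * ([:0, 1:] * P 0) = smult (l\<^sup>2) [:0, 0, 1:]"
    by (simp add: P_0_l power2_eq_square)
  also have "L (smult (l\<^sup>2) [:0, 0, 1:]) = l\<^sup>2 * L [:0, 0, 1:]"
    by (rule L_smult)
  finally show "A 1 ^ 2 = L [:0, 0, 1:] / L 1"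
    using \<open>l \<noteq> 0\<close> by (simp add: L_1)
  show "L 1 > 0"
    using \<open>l \<noteq> 0\<close> by (simp add: L_1)
qed

end

section \<open>Integration by parts and moments of the Painleve IV weight\<close>

lemma abs_exp_minus_1_le: "\<bar>exp a - 1\<bar> \<le> \<bar>a\<bar> * exp \<bar>a\<bar>" for a :: real
proof (cases "a \<ge> 0")
  case True
  have "1 - a \<le> exp (- a)"
    using exp_ge_add_one_self[of "- a"] by linarith
  then have "(1 - a) * exp a \<le> exp (- a) * exp a"
    by (simp add: mult_right_mono)
  then have "exp a - 1 \<le> a * exp a"
    by (simp add: exp_minus field_simps)
  then show ?thesis
    using True by simp
next
  case False
  have "1 + a \<le> exp a"
    using exp_ge_add_one_self[of a] by linarith
  moreover have "exp a \<le> 1" "1 \<le> exp \<bar>a\<bar>"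
    using False by auto
  ultimately have "\<bar>exp a - 1\<bar> \<le> \<bar>a\<bar> * 1"
    using False by (simp only: abs_if mult_1_right split: if_split) linarith
  also have "\<dots> \<le> \<bar>a\<bar> * exp \<bar>a\<bar>"
    using \<open>1 \<le> exp \<bar>a\<bar>\<close> by (intro mult_left_mono) auto
  finally show ?thesis .
qed

lemma integrable_tendsto_at_top_imp_0:
  fixes g :: "real \<Rightarrow> real"
  assumes int: "integrable lborel g" and lim: "(g \<longlongrightarrow> c) at_top"
  shows "c = 0"
proof (rule ccontr)
  assume "c \<noteq> 0"
  then have "\<forall>\<^sub>F x in at_top. \<bar>c\<bar> / 2 < \<bar>g x\<bar>"
    by (intro order_tendstoD(1)[OF tendsto_rabs[OF lim]]) simp
  then obtain M where M: "\<And>x. x \<ge> M \<Longrightarrow> \<bar>c\<bar> / 2 < \<bar>g x\<bar>"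
    by (auto simp: eventually_at_top_linorder)
  have bound: "real N * (\<bar>c\<bar> / 2) \<le> (LINT x|lborel. \<bar>g x\<bar>)" for N :: nat
  proof -
    have "integrable lborel (\<lambda>x. \<bar>c\<bar> / 2 * indicat_real {M..M + real N} x)"
      by (intro integrable_mult_right integrable_real_indicator) auto
    then have "(LINT x|lborel. \<bar>c\<bar> / 2 * indicat_real {M..M + real N} x) \<le> (LINT x|lborel. \<bar>g x\<bar>)"
      using int M by (intro integral_mono) (auto simp: indicator_def less_imp_le)
    then show ?thesis
      by (simp add: measure_lborel_Icc mult.commute)
  qed
  obtain N :: nat where "real N > 2 * (LINT x|lborel. \<bar>g x\<bar>) / \<bar>c\<bar>"
    using reals_Archimedean2 by blast
  then have "real N * (\<bar>c\<bar> / 2) > (LINT x|lborel. \<bar>g x\<bar>)"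
    using \<open>c \<noteq> 0\<close> by (simp add: field_simps)
  with bound[of N] show False
    by simp
qed

text \<open>The truncated integrals \<open>F b - F (- b)\<close> converge to \<open>\<integral> f\<close> and are themselves integrable
  in \<open>b\<close>, so their limit is \<open>0\<close>.\<close>
lemma integral_eq_0_if_integrable_antiderivative:
  fixes f F :: "real \<Rightarrow> real"
  assumes S: "finite S" and cont: "continuous_on UNIV F"
    and deriv: "\<And>x. x \<notin> S \<Longrightarrow> (F has_real_derivative f x) (at x)"
    and int_f: "integrable lborel f" and int_F: "integrable lborel F"
  shows "(LINT x|lborel. f x) = 0"
proof -
  have truncated: "(LINT x|lborel. indicat_real {-b..b} x *\<^sub>R f x) = F b - F (- b)" if "b > 0" for b
  proof -
    have "(f has_integral F b - F (- b)) {-b..b}"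
      using S that deriv continuous_on_subset[OF cont]
      by (intro fundamental_theorem_of_calculus_interior_strong[of S])
        (auto simp: has_real_derivative_iff_has_vector_derivative)
    moreover have "set_integrable lborel {-b..b} f"
      unfolding set_integrable_def by (rule integrable_mult_indicator) (auto intro: int_f)
    ultimately show ?thesis
      using set_borel_integral_eq_integral(2)[of "{-b..b}" f]
      unfolding set_lebesgue_integral_def by (simp add: integral_unique)
  qed
  have "((\<lambda>b. LINT x|lborel. indicat_real {-b..b} x *\<^sub>R f x) \<longlongrightarrow> (LINT x|lborel. f x)) at_top"
  proof (rule integral_dominated_convergence_at_top[where w = "\<lambda>x. \<bar>f x\<bar>"])
    show "AE x in lborel. ((\<lambda>b. indicat_real {-b..b} x *\<^sub>R f x) \<longlongrightarrow> f x) at_top"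
    proof (rule AE_I2, rule tendsto_eventually)
      show "\<forall>\<^sub>F b in at_top. indicat_real {-b..b} x *\<^sub>R f x = f x" for x
        using eventually_ge_at_top[of "\<bar>x\<bar>"] by eventually_elim (auto simp: indicator_def)
    qed
    show "(\<lambda>x. indicat_real {-b..b} x *\<^sub>R f x) \<in> borel_measurable lborel" for b
      using int_f by auto
    show "\<forall>\<^sub>F b in at_top. AE x in lborel. norm (indicat_real {-b..b} x *\<^sub>R f x) \<le> \<bar>f x\<bar>"
      by (auto simp: indicator_def)
  qed (use int_f in auto)
  moreover have "\<forall>\<^sub>F b in at_top. (LINT x|lborel. indicat_real {-b..b} x *\<^sub>R f x) = F b - F (- b)"
    using eventually_gt_at_top[of "0::real"] by eventually_elim (rule truncated)
  ultimately have "((\<lambda>b. F b - F (- b)) \<longlongrightarrow> (LINT x|lborel. f x)) at_top"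
    by (rule Lim_transform_eventually)
  moreover have "integrable lborel (\<lambda>b. F b - F (- b))"
    using int_F lborel_integrable_real_affine[OF int_F, of "-1" 0] by simp
  ultimately show ?thesis
    using integrable_tendsto_at_top_imp_0 by blast
qed

lemma has_real_derivative_mult_abs_powr:
  fixes u g :: real
  assumes "u \<noteq> 0"
  shows "((\<lambda>u. u * \<bar>u\<bar> powr g) has_real_derivative (g + 1) * \<bar>u\<bar> powr g) (at u)"
proof -
  have abs_powr: "\<bar>x\<bar> powr g = (x\<^sup>2) powr (g / 2)" for x :: real
  proof (cases "x = 0")
    case False
    then have "x\<^sup>2 = \<bar>x\<bar> powr 2"
      by (simp add: powr_realpow[symmetric])
    then have "(x\<^sup>2) powr (g / 2) = (\<bar>x\<bar> powr 2) powr (g / 2)"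
      by (simp only:)
    also have "\<dots> = \<bar>x\<bar> powr (2 * (g / 2))"
      by (rule powr_powr)
    finally show ?thesis
      by simp
  qed simp
  have pos: "u\<^sup>2 > 0"
    using assms by simp
  have powr_minus_1: "(u\<^sup>2) powr (g / 2 - 1) = (u\<^sup>2) powr (g / 2) / u\<^sup>2"
    using pos by (simp add: powr_diff)
  have "((\<lambda>u. u\<^sup>2) has_real_derivative 2 * u) (at u)"
    by (auto intro!: derivative_eq_intros)
  from DERIV_chain2[OF has_real_derivative_powr[OF pos] this]
  have "((\<lambda>u. (u\<^sup>2) powr (g / 2)) has_real_derivative g / 2 * (u\<^sup>2) powr (g / 2 - 1) * (2 * u)) (at u)" .
  then have "((\<lambda>u. u * (u\<^sup>2) powr (g / 2)) has_real_derivative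
      1 * (u\<^sup>2) powr (g / 2) + (g / 2 * (u\<^sup>2) powr (g / 2 - 1) * (2 * u)) * u) (at u)"
    by (intro DERIV_mult DERIV_ident)
  moreover have "1 * (u\<^sup>2) powr (g / 2) + (g / 2 * (u\<^sup>2) powr (g / 2 - 1) * (2 * u)) * u
      = (g + 1) * (u\<^sup>2) powr (g / 2)"
    unfolding powr_minus_1 using pos by (simp add: field_simps power2_eq_square)
  ultimately show ?thesis
    unfolding abs_powr by simp
qed

lemma tendsto_mult_abs_powr_0:
  fixes g :: real
  assumes "g > -1"
  shows "((\<lambda>u. u * \<bar>u\<bar> powr g) \<longlongrightarrow> 0) (at 0)"
proof -
  have abs_eq: "\<bar>u * \<bar>u\<bar> powr g\<bar> = \<bar>u\<bar> powr (g + 1)" for u :: real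
    by (cases "u = 0") (simp_all add: abs_mult powr_add)
  have "((\<lambda>u::real. \<bar>u\<bar> powr (g + 1)) \<longlongrightarrow> 0) (at 0)"
    using assms by (intro tendsto_zero_powrI) (auto intro!: tendsto_eq_intros)
  then have "((\<lambda>u. \<bar>u * \<bar>u\<bar> powr g\<bar>) \<longlongrightarrow> 0) (at 0)"
    unfolding abs_eq .
  then show ?thesis
    by (simp add: tendsto_rabs_zero_iff)
qed

lemma X_mult_pIV_weight_has_derivative:
  fixes R :: "real poly"
  assumes "u \<noteq> 0"
  shows "((\<lambda>u. poly ([:0, 1:] * R) u * pIV_weight \<rho> t u) has_real_derivative
    poly (smult (2 * \<rho> + 2) R + [:0, 1:] * pderiv R - [:0, 1:] * [:0, 2 * t, 0, 1:] * R) u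
      * pIV_weight \<rho> t u) (at u)"
proof -
  define E where "E u = exp (- (u ^ 4) / 4 - t * u ^ 2)" for u :: real
  have E_deriv: "(E has_real_derivative E u * (- (u ^ 3) - 2 * t * u)) (at u)"
    unfolding E_def by (auto intro!: derivative_eq_intros simp: power2_eq_square power3_eq_cube)
  have "(\<lambda>u. poly ([:0, 1:] * R) u * pIV_weight \<rho> t u) = (\<lambda>u. poly R u * (u * \<bar>u\<bar> powr (2 * \<rho> + 1)) * E u)"
    by (auto simp: fun_eq_iff pIV_weight_def E_def)
  moreover have "((\<lambda>u. poly R u * (u * \<bar>u\<bar> powr (2 * \<rho> + 1)) * E u) has_real_derivative
      (poly (pderiv R) u * (u * \<bar>u\<bar> powr (2 * \<rho> + 1)) + ((2 * \<rho> + 1 + 1) * \<bar>u\<bar> powr (2 * \<rho> + 1)) * poly R u)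
        * E u + (E u * (- (u ^ 3) - 2 * t * u)) * (poly R u * (u * \<bar>u\<bar> powr (2 * \<rho> + 1)))) (at u)"
    by (intro DERIV_mult poly_DERIV has_real_derivative_mult_abs_powr[OF assms] E_deriv)
  ultimately show ?thesis
    by (simp add: pIV_weight_def E_def algebra_simps power2_eq_square power3_eq_cube)
qed

text \<open>This is where \<open>\<rho> > -1\<close> is needed: \<open>u \<bar>u\<bar>^(2\<rho> + 1)\<close> tends to \<open>0\<close> at \<open>0\<close>.\<close>
lemma isCont_X_mult_pIV_weight:
  fixes R :: "real poly"
  assumes "\<rho> > -1"
  shows "isCont (\<lambda>u. poly ([:0, 1:] * R) u * pIV_weight \<rho> t u) u"
proof (cases "u = 0")
  case True
  define E where "E u = exp (- (u ^ 4) / 4 - t * u ^ 2)" for u :: real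
  have "((\<lambda>u. poly R u * E u * (u * \<bar>u\<bar> powr (2 * \<rho> + 1))) \<longlongrightarrow> poly R 0 * E 0 * 0) (at 0)"
  proof (intro tendsto_mult tendsto_mult_abs_powr_0)
    show "(poly R \<longlongrightarrow> poly R 0) (at 0)"
      using DERIV_isCont[OF poly_DERIV[of R 0]] by (simp add: isCont_def)
    show "(E \<longlongrightarrow> E 0) (at 0)"
      unfolding E_def by (intro tendsto_eq_intros) auto
  qed (use assms in simp)
  moreover have "(\<lambda>u. poly ([:0, 1:] * R) u * pIV_weight \<rho> t u) = (\<lambda>u. poly R u * E u * (u * \<bar>u\<bar> powr (2 * \<rho> + 1)))"
    by (auto simp: fun_eq_iff pIV_weight_def E_def)
  ultimately show ?thesis
    using True by (simp add: isCont_def)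
next
  case False
  then show ?thesis
    by (rule DERIV_isCont[OF X_mult_pIV_weight_has_derivative])
qed

lemma pIV_weight_integration_by_parts:
  fixes \<rho> t :: real and R :: "real poly"
  assumes rho: "\<rho> > -1"
    and int: "\<And>q. integrable lborel (\<lambda>u. poly q u * pIV_weight \<rho> t u)"
  shows "(LINT u|lborel. poly (smult (2 * \<rho> + 2) R + [:0, 1:] * pderiv R
                                 - [:0, 1:] * [:0, 2 * t, 0, 1:] * R) u * pIV_weight \<rho> t u) = 0"
proof (rule integral_eq_0_if_integrable_antiderivative)
  show "continuous_on UNIV (\<lambda>u. poly ([:0, 1:] * R) u * pIV_weight \<rho> t u)"
    using isCont_X_mult_pIV_weight[OF rho] by (simp add: continuous_at_imp_continuous_on)
  show "((\<lambda>u. poly ([:0, 1:] * R) u * pIV_weight \<rho> t u) has_real_derivative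
      poly (smult (2 * \<rho> + 2) R + [:0, 1:] * pderiv R - [:0, 1:] * [:0, 2 * t, 0, 1:] * R) u
        * pIV_weight \<rho> t u) (at u)" if "u \<notin> {0}" for u
    using that by (intro X_mult_pIV_weight_has_derivative) simp
  show "integrable lborel (\<lambda>u. poly ([:0, 1:] * R) u * pIV_weight \<rho> t u)"
    by (rule int)
qed (simp, rule int)

definition pIV_moment :: "real \<Rightarrow> nat \<Rightarrow> real \<Rightarrow> real" where
  "pIV_moment \<rho> k t = (LINT u|lborel. u ^ k * pIV_weight \<rho> t u)"

lemma pIV_weight_shift: "pIV_weight \<rho> (t + h) u = pIV_weight \<rho> t u * exp (- h * u\<^sup>2)"
  unfolding pIV_weight_def by (simp add: mult_exp_exp algebra_simps)

lemma abs_exp_difference_quotient_le: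
  fixes h x B :: real
  assumes "h \<noteq> 0" and "\<bar>h\<bar> \<le> B" and "x \<ge> 0"
  shows "\<bar>(exp (- h * x) - 1) / h\<bar> \<le> x * exp (B * x)"
proof -
  have "\<bar>exp (- h * x) - 1\<bar> \<le> \<bar>- h * x\<bar> * exp \<bar>- h * x\<bar>"
    by (rule abs_exp_minus_1_le)
  also have "\<dots> = \<bar>h\<bar> * x * exp (\<bar>h\<bar> * x)"
    using assms(3) by (simp add: abs_mult)
  also have "\<dots> \<le> \<bar>h\<bar> * x * exp (B * x)"
    using assms(2,3) by (intro mult_left_mono) (auto intro!: mult_right_mono)
  finally show ?thesis
    using assms(1) by (simp add: divide_le_eq abs_divide mult.commute mult.left_commute)
qed

lemma tendsto_exp_difference_quotient:
  fixes x :: real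
  assumes "\<And>i. h i \<noteq> 0" and "h \<longlonglongrightarrow> 0"
  shows "(\<lambda>i. (exp (- h i * x) - 1) / h i) \<longlonglongrightarrow> - x"
proof -
  have "((\<lambda>y. exp (- y * x)) has_real_derivative exp (- 0 * x) * - x) (at 0)"
    by (auto intro!: derivative_eq_intros)
  then have "((\<lambda>y. (exp (- y * x) - 1) / y) \<longlongrightarrow> - x) (at 0)"
    unfolding DERIV_def by simp
  then show ?thesis
    using assms unfolding tendsto_at_iff_sequentially by (auto simp: o_def)
qed

lemma pIV_difference_quotient_dominated:
  assumes "h \<noteq> 0" and "\<bar>h\<bar> \<le> B"
  shows "\<bar>u ^ k * pIV_weight \<rho> t u * ((exp (- h * u\<^sup>2) - 1) / h)\<bar> \<le> \<bar>u ^ (k + 2) * pIV_weight \<rho> (t - B) u\<bar>"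
proof -
  have w_nonneg: "pIV_weight \<rho> t u \<ge> 0"
    by (simp add: pIV_weight_def)
  have "\<bar>u ^ k * pIV_weight \<rho> t u * ((exp (- h * u\<^sup>2) - 1) / h)\<bar>
      = \<bar>u ^ k\<bar> * pIV_weight \<rho> t u * \<bar>(exp (- h * u\<^sup>2) - 1) / h\<bar>"
    using w_nonneg by (simp add: abs_mult)
  also have "\<dots> \<le> \<bar>u ^ k\<bar> * pIV_weight \<rho> t u * (u\<^sup>2 * exp (B * u\<^sup>2))"
    using abs_exp_difference_quotient_le[OF assms, of "u\<^sup>2"] w_nonneg by (intro mult_left_mono) auto
  also have "\<dots> = \<bar>u ^ (k + 2) * pIV_weight \<rho> (t - B) u\<bar>"
    using pIV_weight_shift[of \<rho> t "- B" u] w_nonneg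
    by (simp add: abs_mult power_add power_abs power2_eq_square algebra_simps)
  finally show ?thesis .
qed

text \<open>Differentiation under the integral sign, by dominated convergence along sequences \<open>h \<longlonglongrightarrow> 0\<close>.\<close>
lemma pIV_moment_difference_quotient_tendsto:
  assumes int: "\<And>s k. integrable lborel (\<lambda>u. u ^ k * pIV_weight \<rho> s u)"
    and h_nonzero: "\<And>i. h i \<noteq> 0" and h_lim: "h \<longlonglongrightarrow> 0"
  shows "(\<lambda>i. (pIV_moment \<rho> k (t + h i) - pIV_moment \<rho> k t) / h i) \<longlonglongrightarrow> - pIV_moment \<rho> (k + 2) t"
proof -
  have "Bseq h"
    using h_lim by (intro convergent_imp_Bseq) (auto simp: convergent_def)
  then obtain B where B: "\<And>i. \<bar>h i\<bar> \<le> B"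
    by (auto simp: Bseq_def)
  define q where "q i u = u ^ k * pIV_weight \<rho> t u * ((exp (- h i * u\<^sup>2) - 1) / h i)" for i u
  have q_eq: "q i = (\<lambda>u. (u ^ k * pIV_weight \<rho> (t + h i) u - u ^ k * pIV_weight \<rho> t u) / h i)" for i
    by (auto simp: q_def pIV_weight_shift algebra_simps fun_eq_iff)
  have quotient: "(pIV_moment \<rho> k (t + h i) - pIV_moment \<rho> k t) / h i = (LINT u|lborel. q i u)" for i
  proof -
    have "pIV_moment \<rho> k (t + h i) - pIV_moment \<rho> k t
        = (LINT u|lborel. u ^ k * pIV_weight \<rho> (t + h i) u - u ^ k * pIV_weight \<rho> t u)"
      unfolding pIV_moment_def by (rule Bochner_Integration.integral_diff[symmetric]) (rule int)+
    then show ?thesis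
      unfolding q_eq by simp
  qed
  have "(\<lambda>i. LINT u|lborel. q i u) \<longlonglongrightarrow> (LINT u|lborel. - (u ^ (k + 2) * pIV_weight \<rho> t u))"
  proof (rule integral_dominated_convergence[where w = "\<lambda>u. \<bar>u ^ (k + 2) * pIV_weight \<rho> (t - B) u\<bar>"])
    show "q i \<in> borel_measurable lborel" for i
      unfolding q_eq using int by auto
    show "AE u in lborel. (\<lambda>i. q i u) \<longlonglongrightarrow> - (u ^ (k + 2) * pIV_weight \<rho> t u)"
    proof (rule AE_I2)
      fix u :: real
      have "(\<lambda>i. q i u) \<longlonglongrightarrow> u ^ k * pIV_weight \<rho> t u * - (u\<^sup>2)"
        unfolding q_def by (intro tendsto_mult tendsto_const tendsto_exp_difference_quotient h_nonzero h_lim)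
      then show "(\<lambda>i. q i u) \<longlonglongrightarrow> - (u ^ (k + 2) * pIV_weight \<rho> t u)"
        by (simp add: power_add power2_eq_square algebra_simps)
    qed
    show "AE u in lborel. norm (q i u) \<le> \<bar>u ^ (k + 2) * pIV_weight \<rho> (t - B) u\<bar>" for i
      unfolding q_def using pIV_difference_quotient_dominated[OF h_nonzero B] by simp
    show "(\<lambda>u. - (u ^ (k + 2) * pIV_weight \<rho> t u)) \<in> borel_measurable lborel"
      using int[of "k + 2" t] by auto
    show "integrable lborel (\<lambda>u. \<bar>u ^ (k + 2) * pIV_weight \<rho> (t - B) u\<bar>)"
      using int[of "k + 2" "t - B"] by auto
  qed
  then show ?thesis
    unfolding quotient by (simp add: pIV_moment_def)
qed

lemma pIV_moment_has_derivative:
  assumes "\<And>s k. integrable lborel (\<lambda>u. u ^ k * pIV_weight \<rho> s u)"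
  shows "((\<lambda>s. pIV_moment \<rho> k s) has_real_derivative - pIV_moment \<rho> (k + 2) t) (at t)"
  unfolding DERIV_def tendsto_at_iff_sequentially o_def
  using pIV_moment_difference_quotient_tendsto[OF assms] by auto

section \<open>From the Freud and Toda equations to Painleve IV\<close>

text \<open>\<open>l, x, y, z, v\<close> stand for \<open>b\<close> at \<open>k - 1, \<dots>, k + 3\<close>.\<close>
lemma toda_step_identity:
  fixes l x y z v t \<theta>\<^sub>0 \<theta>\<^sub>1 :: real
  assumes "y \<noteq> 0"
    and "x * (y + x + l + 2 * t) = \<theta>\<^sub>0"
    and "y * (z + y + x + 2 * t) = \<theta>\<^sub>1"
    and "z * (v + z + y + 2 * t) = \<theta>\<^sub>0 + 2"
  shows "(0 * y - \<theta>\<^sub>1 * (- y * (z - x))) / (y * y) - (- y * (z - x)) - (- x * (y - l)) - 2 * 1 = - z * (v - y)"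
proof -
  have "(0 * y - \<theta>\<^sub>1 * (- y * (z - x))) / (y * y) = (z + y + x + 2 * t) * (z - x)"
    using assms(1) unfolding assms(3)[symmetric] by (simp add: field_simps)
  moreover have "(z + y + x + 2 * t) * (z - x) - (- y * (z - x)) - (- x * (y - l)) - 2 * 1 + z * (v - y)
      = (z * (v + z + y + 2 * t) - (\<theta>\<^sub>0 + 2)) - (x * (y + x + l + 2 * t) - \<theta>\<^sub>0)"
    by (simp add: algebra_simps)
  ultimately show ?thesis
    using assms(2,4) by simp
qed

text \<open>\<open>l, m, x, y, z\<close> stand for \<open>b\<close> at \<open>n - 2, \<dots>, n + 2\<close>; the left-hand side is \<open>b n''\<close>
  as computed from the Toda equations.\<close>
lemma painleve_IV_identity:
  fixes l m x y z t \<theta>\<^sub>0 \<theta>\<^sub>1 :: real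
  assumes "x \<noteq> 0"
    and "m * (x + m + l + 2 * t) = \<theta>\<^sub>1 - 2"
    and "x * (y + x + m + 2 * t) = \<theta>\<^sub>0"
    and "y * (z + y + x + 2 * t) = \<theta>\<^sub>1"
  shows "x * (y - m)\<^sup>2 - x * (m * (x - l) - y * (z - x))
    = (- x * (y - m))\<^sup>2 / (2 * x) + 3 * x ^ 3 / 2 + 4 * t * x\<^sup>2
      + 2 * (t\<^sup>2 - (\<theta>\<^sub>0 / 2 - \<theta>\<^sub>1 + 1)) * x + (- \<theta>\<^sub>0\<^sup>2 / 2) / x"
proof -
  have "(x * (y - m)\<^sup>2 - x * (m * (x - l) - y * (z - x))) * (2 * x)
      = (- x * (y - m))\<^sup>2 + 3 * x ^ 4 + 8 * t * x ^ 3 + 4 * (t\<^sup>2 - (\<theta>\<^sub>0 / 2 - \<theta>\<^sub>1 + 1)) * x\<^sup>2 - \<theta>\<^sub>0\<^sup>2"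
    using assms(2-4) by algebra
  moreover have "(- x * (y - m))\<^sup>2 / (2 * x) + 3 * x ^ 3 / 2 + 4 * t * x\<^sup>2
      + 2 * (t\<^sup>2 - (\<theta>\<^sub>0 / 2 - \<theta>\<^sub>1 + 1)) * x + (- \<theta>\<^sub>0\<^sup>2 / 2) / x
    = ((- x * (y - m))\<^sup>2 + 3 * x ^ 4 + 8 * t * x ^ 3 + 4 * (t\<^sup>2 - (\<theta>\<^sub>0 / 2 - \<theta>\<^sub>1 + 1)) * x\<^sup>2 - \<theta>\<^sub>0\<^sup>2)
      / (2 * x)"
    using assms(1) by (simp add: field_simps power2_eq_square power3_eq_cube)
      (simp add: algebra_simps power4_eq_xxxx)
  ultimately show ?thesis
    using assms(1) by (metis nonzero_mult_div_cancel_right mult_eq_0_iff zero_neq_numeral)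
qed

locale freud_family =
  fixes b :: "real \<Rightarrow> nat \<Rightarrow> real" and \<theta> :: "nat \<Rightarrow> real"
  assumes freud: "\<And>t k. b t k * (b t (k + 1) + b t k + b t (k - 1) + 2 * t) = \<theta> k"
    and \<theta>_step: "\<And>k. \<theta> (k + 2) = \<theta> k + 2"
    and b_0: "\<And>t. b t 0 = 0"
    and b_pos: "\<And>t k. k \<ge> 1 \<Longrightarrow> b t k > 0"
begin

text \<open>Freud's equation at \<open>k + 1\<close> expresses \<open>b (k + 2)\<close> through \<open>b (k + 1)\<close> and \<open>b k\<close>.\<close>
lemma toda_step:
  assumes "\<And>t. ((\<lambda>s. b s k) has_real_derivative - b t k * (b t (k + 1) - b t (k - 1))) (at t)"
    and "\<And>t. ((\<lambda>s. b s (k + 1)) has_real_derivative - b t (k + 1) * (b t (k + 2) - b t k)) (at t)"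
  shows "((\<lambda>s. b s (k + 2)) has_real_derivative - b t (k + 2) * (b t (k + 3) - b t (k + 1))) (at t)"
proof -
  have "(\<lambda>s. b s (k + 2)) = (\<lambda>s. \<theta> (k + 1) / b s (k + 1) - b s (k + 1) - b s k - 2 * s)"
  proof
    fix s
    show "b s (k + 2) = \<theta> (k + 1) / b s (k + 1) - b s (k + 1) - b s k - 2 * s"
      using freud[of s "k + 1"] b_pos[of "k + 1" s] by (simp add: field_simps numeral_2_eq_2)
  qed
  moreover have "((\<lambda>s. \<theta> (k + 1) / b s (k + 1) - b s (k + 1) - b s k - 2 * s) has_real_derivative
      (0 * b t (k + 1) - \<theta> (k + 1) * (- b t (k + 1) * (b t (k + 2) - b t k))) / (b t (k + 1) * b t (k + 1))
      - (- b t (k + 1) * (b t (k + 2) - b t k)) - (- b t k * (b t (k + 1) - b t (k - 1))) - 2 * 1) (at t)"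
    using assms b_pos[of "k + 1" t] by (intro DERIV_diff DERIV_divide DERIV_const DERIV_cmult DERIV_ident) auto
  moreover have "(0 * b t (k + 1) - \<theta> (k + 1) * (- b t (k + 1) * (b t (k + 2) - b t k))) / (b t (k + 1) * b t (k + 1))
      - (- b t (k + 1) * (b t (k + 2) - b t k)) - (- b t k * (b t (k + 1) - b t (k - 1))) - 2 * 1
      = - b t (k + 2) * (b t (k + 3) - b t (k + 1))"
  proof (rule toda_step_identity)
    show "b t (k + 1) \<noteq> 0"
      using b_pos[of "k + 1" t] by simp
    show "b t k * (b t (k + 1) + b t k + b t (k - 1) + 2 * t) = \<theta> k"
      by (rule freud)
    show "b t (k + 1) * (b t (k + 2) + b t (k + 1) + b t k + 2 * t) = \<theta> (k + 1)"
      using freud[of t "k + 1"] by (simp add: numeral_2_eq_2)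
    show "b t (k + 2) * (b t (k + 3) + b t (k + 2) + b t (k + 1) + 2 * t) = \<theta> k + 2"
      using freud[of t "k + 2"] \<theta>_step[of k] by (simp add: numeral_2_eq_2 numeral_3_eq_3)
  qed
  ultimately show ?thesis
    by simp
qed

lemma toda:
  assumes b_1: "\<And>t. ((\<lambda>s. b s 1) has_real_derivative - b t 1 * b t 2) (at t)"
  shows "((\<lambda>s. b s k) has_real_derivative - b t k * (b t (k + 1) - b t (k - 1))) (at t)"
proof -
  have "(\<forall>t. ((\<lambda>s. b s k) has_real_derivative - b t k * (b t (k + 1) - b t (k - 1))) (at t)) \<and>
        (\<forall>t. ((\<lambda>s. b s (k + 1)) has_real_derivative - b t (k + 1) * (b t (k + 2) - b t k)) (at t))"
  proof (induction k)
    case 0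
    show ?case
      using b_1 by (simp add: b_0 numeral_2_eq_2)
  next
    case (Suc k)
    then show ?case
      using toda_step[of k] by (simp add: numeral_2_eq_2 numeral_3_eq_3)
  qed
  then show ?thesis
    by blast
qed

lemma painleve_IV:
  assumes b_1: "\<And>t. ((\<lambda>s. b s 1) has_real_derivative - b t 1 * b t 2) (at t)"
    and n: "n \<ge> 1"
  shows "\<exists>v' v''. \<forall>t. ((\<lambda>s. b s n) has_real_derivative v' t) (at t) \<and> (v' has_real_derivative v'' t) (at t) \<and>
    v'' t = (v' t)\<^sup>2 / (2 * b t n) + 3 * b t n ^ 3 / 2 + 4 * t * (b t n)\<^sup>2
            + 2 * (t\<^sup>2 - (\<theta> n / 2 - \<theta> (n + 1) + 1)) * b t n + (- (\<theta> n)\<^sup>2 / 2) / b t n"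
proof (intro exI allI conjI)
  fix t
  define v' where "v' t = - b t n * (b t (n + 1) - b t (n - 1))" for t
  define v'' where "v'' t = - (- b t n * (b t (n + 1) - b t (n - 1))) * (b t (n + 1) - b t (n - 1))
    + (- b t (n + 1) * (b t (n + 1 + 1) - b t (n + 1 - 1)) - - b t (n - 1) * (b t (n - 1 + 1) - b t (n - 1 - 1)))
      * - b t n" for t
  show "((\<lambda>s. b s n) has_real_derivative v' t) (at t)"
    unfolding v'_def by (rule toda[OF b_1])
  show "(v' has_real_derivative v'' t) (at t)"
    unfolding v'_def v''_def by (intro DERIV_mult DERIV_minus DERIV_diff toda[OF b_1])
  have idx: "n + 1 + 1 = n + 2" "n + 1 - 1 = n" "n - 1 + 1 = n" "n - 1 - 1 = n - 2" "n - 1 + 2 = n + 1"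
    using n by auto
  have "v'' t = b t n * (b t (n + 1) - b t (n - 1))\<^sup>2
      - b t n * (b t (n - 1) * (b t n - b t (n - 2)) - b t (n + 1) * (b t (n + 2) - b t n))"
    unfolding v''_def idx by (simp add: algebra_simps power2_eq_square)
  also have "\<dots> = (v' t)\<^sup>2 / (2 * b t n) + 3 * b t n ^ 3 / 2 + 4 * t * (b t n)\<^sup>2
            + 2 * (t\<^sup>2 - (\<theta> n / 2 - \<theta> (n + 1) + 1)) * b t n + (- (\<theta> n)\<^sup>2 / 2) / b t n"
    unfolding v'_def
  proof (rule painleve_IV_identity)
    show "b t n \<noteq> 0"
      using b_pos[OF n, of t] by simp
    show "b t (n - 1) * (b t n + b t (n - 1) + b t (n - 2) + 2 * t) = \<theta> (n + 1) - 2"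
      using freud[of t "n - 1", unfolded idx] \<theta>_step[of "n - 1", unfolded idx] by linarith
    show "b t n * (b t (n + 1) + b t n + b t (n - 1) + 2 * t) = \<theta> n"
      by (rule freud)
    show "b t (n + 1) * (b t (n + 2) + b t (n + 1) + b t n + 2 * t) = \<theta> (n + 1)"
      using freud[of t "n + 1", unfolded idx] .
  qed
  finally show "v'' t = (v' t)\<^sup>2 / (2 * b t n) + 3 * b t n ^ 3 / 2 + 4 * t * (b t n)\<^sup>2
            + 2 * (t\<^sup>2 - (\<theta> n / 2 - \<theta> (n + 1) + 1)) * b t n + (- (\<theta> n)\<^sup>2 / 2) / b t n" .
qed

end

section \<open>The recurrence coefficients of the Painleve IV weight\<close>

locale pIV_recurrence =
  fixes \<rho> :: real and p :: "real \<Rightarrow> nat \<Rightarrow> real poly" and a :: "real \<Rightarrow> nat \<Rightarrow> real"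
  assumes rho: "\<rho> > -1"
    and orth: "\<And>t. orthonormal_polys (pIV_weight \<rho> t) (p t)"
    and a_0: "\<And>t. a t 0 = 0"
    and a_pos: "\<And>t k. k \<ge> 1 \<Longrightarrow> a t k > 0"
    and rec: "\<And>t k u. a t (k + 1) * poly (p t (k + 1)) u = u * poly (p t k) u - a t k * poly (p t (k - 1)) u"
begin

definition \<theta> :: "nat \<Rightarrow> real" where
  "\<theta> k = real k + (2 * \<rho> + 1) * of_bool (odd k)"

lemma orthonormal_three_term_at: "orthonormal_three_term (pIV_weight \<rho> t) (p t) (a t)"
  unfolding orthonormal_three_term_def using orth a_0 a_pos rec by blast

lemma integrable_poly_pIV_weight: "integrable lborel (\<lambda>u. poly q u * pIV_weight \<rho> t u)"
  by (rule orthonormal_three_term.integrable_poly_weight[OF orthonormal_three_term_at])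

lemma integrable_moment_pIV_weight: "integrable lborel (\<lambda>u. u ^ k * pIV_weight \<rho> t u)"
  using integrable_poly_pIV_weight[of "monom 1 k" t] by (simp add: poly_monom)

lemma by_parts_pIV:
  "orthonormal_three_term.L (pIV_weight \<rho> t)
     (smult (2 * \<rho> + 2) R + [:0, 1:] * pderiv R - [:0, 1:] * [:0, 2 * t, 0, 1:] * R) = 0"
  unfolding orthonormal_three_term.L_def[OF orthonormal_three_term_at]
  by (rule pIV_weight_integration_by_parts[OF rho integrable_poly_pIV_weight])

lemma freud_pIV:
  "(a t k)\<^sup>2 * ((a t (k + 1))\<^sup>2 + (a t k)\<^sup>2 + (a t (k - 1))\<^sup>2 + 2 * t) = \<theta> k"
proof (cases "k = 0")
  case True
  then show ?thesis
    by (simp add: a_0 \<theta>_def)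
next
  case False
  then show ?thesis
    using orthonormal_three_term.freud_equation[OF orthonormal_three_term_at by_parts_pIV, of k]
    by (simp add: \<theta>_def)
qed

lemma moments_pIV:
  shows pIV_moment_0_pos: "pIV_moment \<rho> 0 t > 0"
    and a_1_squared_eq: "(a t 1)\<^sup>2 = pIV_moment \<rho> 2 t / pIV_moment \<rho> 0 t"
    and pIV_moment_4_eq: "pIV_moment \<rho> 4 t = (2 * \<rho> + 2) * pIV_moment \<rho> 0 t - 2 * t * pIV_moment \<rho> 2 t"
proof -
  interpret orthonormal_three_term "pIV_weight \<rho> t" "p t" "a t"
    by (rule orthonormal_three_term_at)
  have L_moments: "L 1 = pIV_moment \<rho> 0 t" "L [:0, 0, 1:] = pIV_moment \<rho> 2 t"
      "L [:0, 0, 0, 0, 1:] = pIV_moment \<rho> 4 t"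
    by (simp_all add: L_def pIV_moment_def power2_eq_square power4_eq_xxxx mult.assoc)
  show "pIV_moment \<rho> 0 t > 0" "(a t 1)\<^sup>2 = pIV_moment \<rho> 2 t / pIV_moment \<rho> 0 t"
    using L_1_pos A_1_squared by (simp_all add: L_moments)
  have "smult (2 * \<rho> + 2) 1 + [:0, 1:] * pderiv 1 - [:0, 1:] * [:0, 2 * t, 0, 1:] * 1
      = smult (2 * \<rho> + 2) 1 - smult (2 * t) [:0, 0, 1:] - [:0, 0, 0, 0, 1:]"
    by (simp add: poly_eq_poly_eq_iff[symmetric] fun_eq_iff algebra_simps)
  then have "(2 * \<rho> + 2) * pIV_moment \<rho> 0 t - 2 * t * pIV_moment \<rho> 2 t - pIV_moment \<rho> 4 t = 0"
    using by_parts_pIV[of t 1] by (simp only: L_diff L_smult L_moments)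
  then show "pIV_moment \<rho> 4 t = (2 * \<rho> + 2) * pIV_moment \<rho> 0 t - 2 * t * pIV_moment \<rho> 2 t"
    by simp
qed

lemma a_1_squared_has_derivative:
  "((\<lambda>s. (a s 1)\<^sup>2) has_real_derivative - (a t 1)\<^sup>2 * (a t 2)\<^sup>2) (at t)"
proof -
  define \<mu> where "\<mu> k = pIV_moment \<rho> k t" for k
  have "(a t 1)\<^sup>2 * ((a t 2)\<^sup>2 + (a t 1)\<^sup>2 + 2 * t) = 2 * \<rho> + 2"
    using freud_pIV[of t 1] by (simp add: a_0 \<theta>_def numeral_2_eq_2 algebra_simps)
  then have "- (a t 1)\<^sup>2 * (a t 2)\<^sup>2 = ((a t 1)\<^sup>2)\<^sup>2 + 2 * t * (a t 1)\<^sup>2 - (2 * \<rho> + 2)"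
    by algebra
  also have "\<dots> = (\<mu> 2 / \<mu> 0)\<^sup>2 + 2 * t * (\<mu> 2 / \<mu> 0) - (2 * \<rho> + 2)"
    by (simp only: a_1_squared_eq \<mu>_def)
  also have "\<dots> = (- \<mu> 4 * \<mu> 0 - \<mu> 2 * - \<mu> 2) / (\<mu> 0 * \<mu> 0)"
    using pIV_moment_0_pos[of t] unfolding \<mu>_def pIV_moment_4_eq
    by (simp add: field_simps algebra_simps power2_eq_square)
  finally have quotient_rule_value: "(- \<mu> 4 * \<mu> 0 - \<mu> 2 * - \<mu> 2) / (\<mu> 0 * \<mu> 0) = - (a t 1)\<^sup>2 * (a t 2)\<^sup>2"
    by simp
  have "((\<lambda>s. pIV_moment \<rho> 2 s) has_real_derivative - pIV_moment \<rho> 4 t) (at t)"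
    using pIV_moment_has_derivative[OF integrable_moment_pIV_weight, of 2 t] by simp
  moreover have "((\<lambda>s. pIV_moment \<rho> 0 s) has_real_derivative - pIV_moment \<rho> 2 t) (at t)"
    using pIV_moment_has_derivative[OF integrable_moment_pIV_weight, of 0 t] by (simp add: numeral_2_eq_2)
  ultimately have "((\<lambda>s. pIV_moment \<rho> 2 s / pIV_moment \<rho> 0 s) has_real_derivative
      (- \<mu> 4 * \<mu> 0 - \<mu> 2 * - \<mu> 2) / (\<mu> 0 * \<mu> 0)) (at t)"
    using pIV_moment_0_pos[of t] unfolding \<mu>_def by (intro DERIV_divide) auto
  moreover have "(\<lambda>s. (a s 1)\<^sup>2) = (\<lambda>s. pIV_moment \<rho> 2 s / pIV_moment \<rho> 0 s)"
    by (rule ext) (rule a_1_squared_eq)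
  ultimately show ?thesis
    unfolding quotient_rule_value by (simp only:)
qed

sublocale freud_family "\<lambda>t k. (a t k)\<^sup>2" \<theta>
proof
  show "(a t k)\<^sup>2 * ((a t (k + 1))\<^sup>2 + (a t k)\<^sup>2 + (a t (k - 1))\<^sup>2 + 2 * t) = \<theta> k" for t k
    by (rule freud_pIV)
  show "\<theta> (k + 2) = \<theta> k + 2" for k
    by (simp add: \<theta>_def)
  show "(a t k)\<^sup>2 > 0" if "k \<ge> 1" for t k
    using a_pos[OF that, of t] by simp
qed (simp add: a_0)

end

theorem mainTheorem14:
  fixes \<rho> :: real
    and p :: "real \<Rightarrow> nat \<Rightarrow> real poly"
    and a :: "real \<Rightarrow> nat \<Rightarrow> real"
    and n :: nat
  assumes rho: "\<rho> > -1"
    and orth: "\<And>t. orthonormal_polys (pIV_weight \<rho> t) (p t)"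
    and a0: "\<And>t. a t 0 = 0"
    and apos: "\<And>t k. k \<ge> 1 \<Longrightarrow> a t k > 0"
    and rec: "\<And>t k u. a t (k + 1) * poly (p t (k + 1)) u
                       = u * poly (p t k) u - a t k * poly (p t (k - 1)) u"
    and n: "n \<ge> 1"
  shows "\<exists>v' v''. \<forall>t.
     ((\<lambda>s. (a s n)\<^sup>2) has_real_derivative v' t) (at t) \<and>
     (v' has_real_derivative v'' t) (at t) \<and>
     (let v = (a t n)\<^sup>2;
          \<alpha> = - real n / 2 - (2 * \<rho> + 1) * (1 + 3 * (-1) ^ n) / 4;
          \<beta> = - (real n + (2 * \<rho> + 1) * ((1 - (-1) ^ n) / 2))\<^sup>2 / 2
      in v'' t = (v' t)\<^sup>2 / (2 * v) + 3 * v ^ 3 / 2 + 4 * t * v\<^sup>2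
                 + 2 * (t\<^sup>2 - \<alpha>) * v + \<beta> / v)"
proof -
  interpret pIV_recurrence \<rho> p a
    unfolding pIV_recurrence_def using rho orth a0 apos rec by blast
  have \<alpha>: "- real n / 2 - (2 * \<rho> + 1) * (1 + 3 * (-1) ^ n) / 4 = \<theta> n / 2 - \<theta> (n + 1) + 1"
    by (cases "even n") (simp_all add: \<theta>_def field_simps)
  have \<beta>: "- (real n + (2 * \<rho> + 1) * ((1 - (-1) ^ n) / 2))\<^sup>2 / 2 = - (\<theta> n)\<^sup>2 / 2"
    by (cases "even n") (simp_all add: \<theta>_def)
  show ?thesis
    unfolding Let_def \<alpha> \<beta> using painleve_IV[OF a_1_squared_has_derivative n] .
qed

end
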